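(* Let $A\in\{0,1,-1\}^{m\times n}$ be such that $G_A$ is a $t$-left-regular $(\gamma,\mu)$-unique expander, and let $s_{\max}$ be the maximum degree of a right vertex of $G_A$. Then for any $p\ge1$, $\delta_1>0$, $\delta_2\in(0,1)$, and every $\gamma n$-sparse $x\in\mathbb{R}^n$, $$\|Ax\|_p^p\ge\left(\frac{t(1-\mu)}{(1+\delta_1)^{p-1}}-\frac{\mu t}{\delta_1^{p-1}}(s_{\max}-1)^{p-1}\right)\|x\|_p^p,$$ $$\|Ax\|_p^p\le\left(\frac{t}{(1-\delta_2)^{p-1}}+\frac{\mu t}{\delta_2^{p-1}}(s_{\max}-1)^{p-1}\right)\|x\|_p^p.$$
   Context: $G_A=(V_L=[n],V_R=[m],E)$ is the bipartite graph with an edge $\{u,r\}$ iff $A_{r,u}\ne0$. It is a $t$-left-regular $(\gamma,\mu)$-unique expander if every left vertex has degree $t$ and every $S\subseteq V_L$ with $|S|\le\gamma n$ has at least $t(1-\mu)|S|$ right vertices with exactly one neighbor in $S$. A vector is $k$-sparse if it has at most $k$ nonzero coordinates. *)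

theory Defs
  imports Complex_Main
begin

text \<open>An m x n matrix is a function A :: nat => nat => real, entry A r u for row r < m and
  column u < n.  The bipartite graph G_A has left vertices {..<n}, right vertices {..<m}
  and an edge {u,r} iff A r u \<noteq> 0.\<close>

definition nbrs_right :: "nat \<Rightarrow> (nat \<Rightarrow> nat \<Rightarrow> real) \<Rightarrow> nat \<Rightarrow> nat set" where
  "nbrs_right m A u = {r. r < m \<and> A r u \<noteq> 0}"

definition left_regular :: "nat \<Rightarrow> nat \<Rightarrow> (nat \<Rightarrow> nat \<Rightarrow> real) \<Rightarrow> nat \<Rightarrow> bool" where
  "left_regular m n A t \<longleftrightarrow> (\<forall>u<n. card (nbrs_right m A u) = t)"

definition unique_neighbors :: "nat \<Rightarrow> (nat \<Rightarrow> nat \<Rightarrow> real) \<Rightarrow> nat set \<Rightarrow> nat set" where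
  "unique_neighbors m A S = {r. r < m \<and> card {u \<in> S. A r u \<noteq> 0} = 1}"

definition unique_expander ::
  "nat \<Rightarrow> nat \<Rightarrow> (nat \<Rightarrow> nat \<Rightarrow> real) \<Rightarrow> nat \<Rightarrow> real \<Rightarrow> real \<Rightarrow> bool" where
  "unique_expander m n A t \<gamma> \<mu> \<longleftrightarrow> left_regular m n A t \<and>
     (\<forall>S. S \<subseteq> {..<n} \<and> real (card S) \<le> \<gamma> * real n \<longrightarrow>
        real (card (unique_neighbors m A S)) \<ge> real t * (1 - \<mu>) * real (card S))"

definition s_max :: "nat \<Rightarrow> nat \<Rightarrow> (nat \<Rightarrow> nat \<Rightarrow> real) \<Rightarrow> nat" where
  "s_max m n A = Max (insert 0 {card {u. u < n \<and> A r u \<noteq> 0} | r. r < m})"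

definition sparse :: "nat \<Rightarrow> (nat \<Rightarrow> real) \<Rightarrow> real \<Rightarrow> bool" where
  "sparse n x k \<longleftrightarrow> real (card {i. i < n \<and> x i \<noteq> 0}) \<le> k"

definition mat_vec :: "nat \<Rightarrow> (nat \<Rightarrow> nat \<Rightarrow> real) \<Rightarrow> (nat \<Rightarrow> real) \<Rightarrow> nat \<Rightarrow> real" where
  "mat_vec n A x r = (\<Sum>u<n. A r u * x u)"

definition pnorm_pow :: "nat \<Rightarrow> real \<Rightarrow> (nat \<Rightarrow> real) \<Rightarrow> real" where
  "pnorm_pow k p x = (\<Sum>i<k. \<bar>x i\<bar> powr p)"

text \<open>Real power with the usual convention 0^0 = 1 (Isabelle's powr has 0 powr 0 = 0).\<close>
definition rpow :: "real \<Rightarrow> real \<Rightarrow> real" where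
  "rpow b e = (if b = 0 then (if e = 0 then 1 else 0) else b powr e)"

end

theory Submission
  imports Defs "HOL-Analysis.Convex"
begin

text \<open>Let S be the support of x, give column u the weight |x u|^p and write N for the sum of
  the weights. Row r of Ax only sees the columns of S adjacent to r; split its sum into the term
  of largest modulus and the rest. Convexity of s^p gives
  (y + z)^p \<le> y^p / (1 - \<delta>)^(p-1) + z^p / \<delta>^(p-1) and a matching lower bound, and the rest
  has at most s_max - 1 terms, so its p-th power is at most (s_max - 1)^(p-1) times their total
  weight. Summing over rows, the largest terms contribute t N minus the total weight D of all
  other terms (left regularity), so everything reduces to D \<le> \<mu> t N.

  For unit weights D counts colliding edges, and unique-neighbour expansion bounds it by
  \<mu> t |S|. General weights reduce to this by a layer-cake induction: subtracting the smallest
  weight from all weights lowers D by that weight times the collision count, and the vertex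
  that now carries weight zero can be removed from S.\<close>

lemma powr_convex_nonneg:
  fixes p :: real
  assumes p: "p \<ge> 1"
  shows "convex_on {0..} (\<lambda>x. x powr p)"
proof (rule convex_onI)
  show "convex {0::real..}"
    by (simp add: convex_real_interval)
  fix t x y :: real
  assume t: "0 < t" "t < 1" and xy: "x \<in> {0..}" "y \<in> {0..}"
  have shrink: "s powr p * z \<le> s * z" if "0 \<le> s" "s \<le> 1" "0 \<le> z" for s z :: real
    using that p by (intro mult_right_mono) (metis powr_one powr_mono')
  show "((1 - t) *\<^sub>R x + t *\<^sub>R y) powr p \<le> (1 - t) * x powr p + t * y powr p"
  proof (cases "x = 0 \<or> y = 0")
    case True
    then show ?thesis
      using t xy shrink[of t "y powr p"] shrink[of "1 - t" "x powr p"] p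
      by (auto simp: powr_mult)
  next
    case False
    then show ?thesis
      using convex_onD[OF powr_convex[OF p], of t x y] t xy by auto
  qed
qed

lemma powr_add_le_weighted:
  fixes y z d p :: real
  assumes y: "y \<ge> 0" and z: "z \<ge> 0" and d: "0 < d" "d < 1" and p: "p \<ge> 1"
  shows "(y + z) powr p \<le> y powr p / (1 - d) powr (p - 1) + z powr p / d powr (p - 1)"
proof -
  have scale: "e * (v / e) powr p = v powr p / e powr (p - 1)" if "e > 0" "v \<ge> 0" for e v :: real
    using that by (simp add: powr_divide powr_diff field_simps)
  have "y + z = (1 - d) *\<^sub>R (y / (1 - d)) + d *\<^sub>R (z / d)"
    using d by simp
  then have "(y + z) powr p \<le> (1 - d) * (y / (1 - d)) powr p + d * (z / d) powr p"
    using convex_onD[OF powr_convex_nonneg[OF p], of d "y / (1 - d)" "z / d"] d y z by auto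
  then show ?thesis
    using scale[of "1 - d" y] scale[of d z] d y z by simp
qed

lemma powr_le_of_le_add:
  fixes w y z d p :: real
  assumes "0 \<le> w" "w \<le> y + z" "0 \<le> y" "0 \<le> z" "0 < d" "d < 1" "p \<ge> 1"
  shows "w powr p \<le> y powr p / (1 - d) powr (p - 1) + z powr p / d powr (p - 1)"
  using powr_mono2[of p w "y + z"] powr_add_le_weighted[of y z d p] assms by linarith

lemma powr_ge_of_le_add:
  fixes w y z d p :: real
  assumes w: "0 \<le> w" and yw: "y \<le> w + z" and y: "0 \<le> y" and z: "0 \<le> z"
    and d: "0 < d" and p: "p \<ge> 1"
  shows "w powr p \<ge> y powr p / (1 + d) powr (p - 1) - z powr p / d powr (p - 1)"
proof -
  define l where "l = d / (1 + d)"
  have l: "0 < l" "l < 1" "1 - l = 1 / (1 + d)"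
    using d by (auto simp: l_def field_simps)
  have "y powr p \<le> w powr p / (1 - l) powr (p - 1) + z powr p / l powr (p - 1)"
    using powr_le_of_le_add[OF y yw w z l(1,2) p] .
  also have "w powr p / (1 - l) powr (p - 1) = w powr p * (1 + d) powr (p - 1)"
    unfolding l(3) using d by (simp add: powr_divide)
  also have "z powr p / l powr (p - 1) = z powr p / d powr (p - 1) * (1 + d) powr (p - 1)"
    unfolding l_def using d by (simp add: powr_divide)
  finally have "y powr p \<le> (w powr p + z powr p / d powr (p - 1)) * (1 + d) powr (p - 1)"
    by (simp add: algebra_simps)
  then have "y powr p / (1 + d) powr (p - 1) \<le> w powr p + z powr p / d powr (p - 1)"
    using d by (simp add: divide_le_eq)
  then show ?thesis
    by simp
qed

lemma powr_sum_le_card_mult_sum_powr: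
  fixes c :: "'a \<Rightarrow> real" and p :: real
  assumes F: "finite F" and c: "\<And>i. i \<in> F \<Longrightarrow> c i \<ge> 0" and p: "p \<ge> 1"
  shows "(\<Sum>i\<in>F. c i) powr p \<le> real (card F) powr (p - 1) * (\<Sum>i\<in>F. c i powr p)"
proof (cases "F = {}")
  case True
  then show ?thesis by simp
next
  case False
  define k where "k = real (card F)"
  have k: "k > 0"
    using F False by (simp add: k_def card_gt_0_iff)
  have "(\<Sum>i\<in>F. (1 / k) *\<^sub>R c i) powr p \<le> (\<Sum>i\<in>F. (1 / k) * c i powr p)"
    by (rule convex_on_sum[OF F False powr_convex_nonneg[OF p]]) (use k c in \<open>auto simp: k_def\<close>)
  then have "(\<Sum>i\<in>F. c i) powr p / (k powr (p - 1) * k) \<le> (\<Sum>i\<in>F. c i powr p) / k"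
    using k c by (simp add: powr_divide sum_nonneg powr_diff flip: sum_divide_distrib)
  then show ?thesis
    using k by (simp add: field_simps k_def[symmetric])
qed

definition excess :: "('a \<Rightarrow> real) \<Rightarrow> 'a set \<Rightarrow> real" where
  "excess a T = (if T = {} then 0 else sum a T - Max (a ` T))"

lemma excess_eq_sum_remove_max:
  assumes "finite T" "v \<in> T" "\<And>u. u \<in> T \<Longrightarrow> a u \<le> a v"
  shows "excess a T = sum a (T - {v})"
proof -
  have "Max (a ` T) = a v"
    using assms by (intro Max_eqI) auto
  then show ?thesis
    using assms by (auto simp: excess_def sum.remove)
qed

lemma excess_nonneg:
  assumes "finite T" "\<And>u. u \<in> T \<Longrightarrow> 0 \<le> a u"
  shows "0 \<le> excess a T"
proof (cases "T = {}")
  case False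
  then have "Max (a ` T) \<in> a ` T"
    using assms(1) by simp
  then obtain v where "v \<in> T" "Max (a ` T) = a v"
    by blast
  moreover have "a v \<le> sum a T"
    using calculation assms by (intro member_le_sum) auto
  ultimately show ?thesis
    using False by (simp add: excess_def)
qed (simp add: excess_def)

lemma excess_diff_const:
  fixes a :: "'a \<Rightarrow> real"
  assumes "finite T"
  shows "excess (\<lambda>u. a u - c) T = excess a T - c * excess (\<lambda>_. 1) T"
proof (cases "T = {}")
  case False
  have "(\<lambda>u. a u - c) ` T = (\<lambda>y. y - c) ` a ` T"
    by auto
  moreover have "Max ((\<lambda>y. y - c) ` a ` T) = Max (a ` T) - c"
    by (rule mono_Max_commute[symmetric]) (use assms False in \<open>auto simp: mono_def\<close>)
  moreover have "(\<lambda>_. 1::real) ` T = {1}"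
    using False by auto
  ultimately show ?thesis
    using False by (simp add: excess_def sum_subtractf algebra_simps)
qed (simp add: excess_def)

lemma excess_insert_zero:
  fixes a :: "'a \<Rightarrow> real"
  assumes T: "finite T" and w: "w \<notin> T" "a w = 0" and nonneg: "\<And>u. u \<in> T \<Longrightarrow> 0 \<le> a u"
  shows "excess a (insert w T) = excess a T"
proof (cases "T = {}")
  case False
  then have "Max (a ` T) \<in> a ` T"
    using T by simp
  then have "0 \<le> Max (a ` T)"
    using nonneg by auto
  then show ?thesis
    using T w False by (simp add: excess_def max_def)
qed (simp add: excess_def w)

lemma powr_abs_sum_le_card_bound:
  fixes c x :: "'a \<Rightarrow> real"
  assumes F: "finite F" and c: "\<And>u. u \<in> F \<Longrightarrow> \<bar>c u\<bar> \<le> 1" and k: "real (card F) \<le> k"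
    and p: "p \<ge> 1"
  shows "\<bar>\<Sum>u\<in>F. c u * x u\<bar> powr p \<le> rpow k (p - 1) * (\<Sum>u\<in>F. \<bar>x u\<bar> powr p)"
proof (cases "F = {}")
  case True
  then show ?thesis by simp
next
  case False
  then have "k \<ge> 1"
    using F k card_gt_0_iff[of F] by linarith
  have "\<bar>\<Sum>u\<in>F. c u * x u\<bar> \<le> (\<Sum>u\<in>F. \<bar>x u\<bar>)"
    using sum_abs[of "\<lambda>u. c u * x u" F] c
      sum_mono[of F "\<lambda>u. \<bar>c u * x u\<bar>" "\<lambda>u. \<bar>x u\<bar>"]
    by (simp add: abs_mult mult_left_le_one_le)
  then have "\<bar>\<Sum>u\<in>F. c u * x u\<bar> powr p \<le> (\<Sum>u\<in>F. \<bar>x u\<bar>) powr p"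
    using p by (intro powr_mono2) auto
  also have "\<dots> \<le> real (card F) powr (p - 1) * (\<Sum>u\<in>F. \<bar>x u\<bar> powr p)"
    using F p by (intro powr_sum_le_card_mult_sum_powr) auto
  also have "\<dots> \<le> k powr (p - 1) * (\<Sum>u\<in>F. \<bar>x u\<bar> powr p)"
    using F False k p by (intro mult_right_mono powr_mono2 sum_nonneg) (auto simp: card_gt_0_iff)
  finally show ?thesis
    using \<open>k \<ge> 1\<close> by (simp add: rpow_def)
qed

lemma sum_split_at_peak:
  fixes c x :: "'a \<Rightarrow> real"
  assumes T: "finite T" and c: "\<And>u. u \<in> T \<Longrightarrow> \<bar>c u\<bar> = 1" and s: "card T \<le> s" and p: "p \<ge> 1"
  defines "a \<equiv> \<lambda>u. \<bar>x u\<bar> powr p"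
  obtains y z where "(\<Sum>u\<in>T. c u * x u) = y + z" "\<bar>y\<bar> powr p = sum a T - excess a T"
    "\<bar>z\<bar> powr p \<le> rpow (real s - 1) (p - 1) * excess a T"
proof (cases "T = {}")
  case True
  then show ?thesis
    using that[of 0 0] by (simp add: excess_def)
next
  case False
  then have "Max ((\<lambda>u. \<bar>x u\<bar>) ` T) \<in> (\<lambda>u. \<bar>x u\<bar>) ` T"
    using T by simp
  then obtain v where v: "v \<in> T" "Max ((\<lambda>u. \<bar>x u\<bar>) ` T) = \<bar>x v\<bar>"
    by blast
  then have "a u \<le> a v" if "u \<in> T" for u
    using that T p Max_ge[of "(\<lambda>u. \<bar>x u\<bar>) ` T" "\<bar>x u\<bar>"] by (auto simp: a_def intro!: powr_mono2)
  then have E: "excess a T = sum a (T - {v})"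
    using excess_eq_sum_remove_max[OF T v(1)] by blast
  have split: "(\<Sum>u\<in>T. c u * x u) = c v * x v + (\<Sum>u\<in>T - {v}. c u * x u)"
    using T v(1) by (simp add: sum.remove)
  have "\<bar>c v * x v\<bar> powr p = sum a T - excess a T"
    using E T v(1) c[OF v(1)] by (simp add: a_def abs_mult sum.remove)
  moreover have "\<bar>\<Sum>u\<in>T - {v}. c u * x u\<bar> powr p \<le> rpow (real s - 1) (p - 1) * sum a (T - {v})"
  proof -
    have "real (card (T - {v})) \<le> real s - 1"
      using T v(1) s card_gt_0_iff[of T] by (auto simp: of_nat_diff)
    then show ?thesis
      unfolding a_def using T p c by (intro powr_abs_sum_le_card_bound) auto
  qed
  ultimately show ?thesis
    using that split E by auto
qed

lemma powr_abs_sum_le_peak: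
  fixes c x :: "'a \<Rightarrow> real"
  assumes T: "finite T" "\<And>u. u \<in> T \<Longrightarrow> \<bar>c u\<bar> = 1" "card T \<le> s" "p \<ge> 1"
    and \<delta>: "0 < \<delta>" "\<delta> < 1"
  defines "a \<equiv> \<lambda>u. \<bar>x u\<bar> powr p"
  shows "\<bar>\<Sum>u\<in>T. c u * x u\<bar> powr p \<le> (sum a T - excess a T) / (1 - \<delta>) powr (p - 1)
           + rpow (real s - 1) (p - 1) * excess a T / \<delta> powr (p - 1)"
proof -
  obtain y z where yz: "(\<Sum>u\<in>T. c u * x u) = y + z" "\<bar>y\<bar> powr p = sum a T - excess a T"
    "\<bar>z\<bar> powr p \<le> rpow (real s - 1) (p - 1) * excess a T"
    using sum_split_at_peak[of T c s p x] T unfolding a_def by blast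
  have "\<bar>y + z\<bar> powr p \<le> \<bar>y\<bar> powr p / (1 - \<delta>) powr (p - 1) + \<bar>z\<bar> powr p / \<delta> powr (p - 1)"
    using T(4) \<delta> by (intro powr_le_of_le_add) auto
  moreover have "\<bar>z\<bar> powr p / \<delta> powr (p - 1) \<le> rpow (real s - 1) (p - 1) * excess a T / \<delta> powr (p - 1)"
    using yz(3) \<delta> by (intro divide_right_mono) auto
  ultimately show ?thesis
    unfolding yz(1) yz(2)[symmetric] by linarith
qed

lemma powr_abs_sum_ge_peak:
  fixes c x :: "'a \<Rightarrow> real"
  assumes T: "finite T" "\<And>u. u \<in> T \<Longrightarrow> \<bar>c u\<bar> = 1" "card T \<le> s" "p \<ge> 1"
    and \<delta>: "0 < \<delta>"
  defines "a \<equiv> \<lambda>u. \<bar>x u\<bar> powr p"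
  shows "\<bar>\<Sum>u\<in>T. c u * x u\<bar> powr p \<ge> (sum a T - excess a T) / (1 + \<delta>) powr (p - 1)
           - rpow (real s - 1) (p - 1) * excess a T / \<delta> powr (p - 1)"
proof -
  obtain y z where yz: "(\<Sum>u\<in>T. c u * x u) = y + z" "\<bar>y\<bar> powr p = sum a T - excess a T"
    "\<bar>z\<bar> powr p \<le> rpow (real s - 1) (p - 1) * excess a T"
    using sum_split_at_peak[of T c s p x] T unfolding a_def by blast
  have "\<bar>y + z\<bar> powr p \<ge> \<bar>y\<bar> powr p / (1 + \<delta>) powr (p - 1) - \<bar>z\<bar> powr p / \<delta> powr (p - 1)"
    using T(4) \<delta> by (intro powr_ge_of_le_add) auto
  moreover have "\<bar>z\<bar> powr p / \<delta> powr (p - 1) \<le> rpow (real s - 1) (p - 1) * excess a T / \<delta> powr (p - 1)"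
    using yz(3) \<delta> by (intro divide_right_mono) auto
  ultimately show ?thesis
    unfolding yz(1) yz(2)[symmetric] by linarith
qed

definition row_support :: "(nat \<Rightarrow> nat \<Rightarrow> real) \<Rightarrow> nat set \<Rightarrow> nat \<Rightarrow> nat set" where
  "row_support A S r = {u \<in> S. A r u \<noteq> 0}"

text \<open>With unit weights, defect counts the colliding edges: those from S that are not the
  first edge from S at their right vertex.\<close>

definition defect :: "nat \<Rightarrow> (nat \<Rightarrow> nat \<Rightarrow> real) \<Rightarrow> (nat \<Rightarrow> real) \<Rightarrow> nat set \<Rightarrow> real" where
  "defect m A a S = (\<Sum>r<m. excess a (row_support A S r))"

lemma finite_row_support [simp]: "finite S \<Longrightarrow> finite (row_support A S r)"
  by (simp add: row_support_def)

lemma defect_nonneg: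
  assumes "finite S" "\<And>u. u \<in> S \<Longrightarrow> 0 \<le> a u"
  shows "0 \<le> defect m A a S"
  unfolding defect_def using assms
  by (intro sum_nonneg excess_nonneg) (auto simp: row_support_def)

lemma defect_diff_const:
  assumes "finite S"
  shows "defect m A (\<lambda>u. a u - c) S = defect m A a S - c * defect m A (\<lambda>_. 1) S"
  unfolding defect_def sum_distrib_left sum_subtractf[symmetric]
  using assms by (intro sum.cong) (auto simp: excess_diff_const)

lemma defect_insert_zero:
  assumes S: "finite S" and w: "w \<notin> S" "a w = 0" and nonneg: "\<And>u. u \<in> S \<Longrightarrow> 0 \<le> a u"
  shows "defect m A a (insert w S) = defect m A a S"
  unfolding defect_def
proof (intro sum.cong refl)
  fix r
  show "excess a (row_support A (insert w S) r) = excess a (row_support A S r)"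
  proof (cases "A r w = 0")
    case False
    then have "row_support A (insert w S) r = insert w (row_support A S r)"
      by (auto simp: row_support_def)
    moreover have "excess a (insert w (row_support A S r)) = excess a (row_support A S r)"
      by (rule excess_insert_zero) (use S w nonneg in \<open>auto simp: row_support_def\<close>)
    ultimately show ?thesis
      by simp
  qed (auto simp: row_support_def intro: arg_cong[where f = "excess a"])
qed

lemma defect_le_of_collision_bound:
  assumes "finite S" "\<And>u. u \<in> S \<Longrightarrow> 0 \<le> a u"
    and "\<And>S'. S' \<subseteq> S \<Longrightarrow> defect m A (\<lambda>_. 1) S' \<le> c * real (card S')"
  shows "defect m A a S \<le> c * sum a S"
  using assms
proof (induction "card S" arbitrary: S a rule: less_induct)
  case less
  show ?case
  proof (cases "S = {}")
    case True
    then show ?thesis by (simp add: defect_def row_support_def excess_def)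
  next
    case False
    then have "Min (a ` S) \<in> a ` S"
      using less.prems(1) by simp
    then obtain w where w: "w \<in> S" "a w = Min (a ` S)"
      by auto
    have w_min: "a w \<le> a u" if "u \<in> S" for u
      using w that less.prems(1) by simp
    define b where "b = (\<lambda>u. a u - a w)"
    define S' where "S' = S - {w}"
    have S: "S = insert w S'" "w \<notin> S'" "finite S'"
      using w less.prems(1) by (auto simp: S'_def)
    have IH: "defect m A b S' \<le> c * sum b S'"
    proof (rule less.hyps)
      show "card S' < card S"
        using S by simp
      show "\<And>u. u \<in> S' \<Longrightarrow> 0 \<le> b u"
        using w_min by (simp add: S'_def b_def)
      show "\<And>S''. S'' \<subseteq> S' \<Longrightarrow> defect m A (\<lambda>_. 1) S'' \<le> c * real (card S'')"
        using less.prems(3) S by blast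
    qed (rule S(3))
    have "defect m A a S = defect m A b S' + a w * defect m A (\<lambda>_. 1) S"
      using defect_diff_const[OF less.prems(1), where a = a and c = "a w" and m = m and A = A] S w_min
        defect_insert_zero[of S' w b m A]
      by (simp add: b_def algebra_simps)
    also have "\<dots> \<le> c * sum b S' + a w * (c * real (card S))"
      using IH less.prems(1,3) less.prems(2)[OF w(1)] by (intro add_mono mult_left_mono) auto
    also have "\<dots> = c * sum a S"
      using S by (simp add: b_def sum_subtractf algebra_simps)
    finally show ?thesis .
  qed
qed

lemma sum_row_support:
  fixes a :: "nat \<Rightarrow> real"
  assumes S: "S \<subseteq> {..<n}" and lr: "left_regular m n A t"
  shows "(\<Sum>r<m. sum a (row_support A S r)) = real t * sum a S"
proof -
  have "finite S"
    using S finite_subset by blast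
  then have "(\<Sum>r<m. sum a (row_support A S r)) = (\<Sum>u\<in>S. \<Sum>r<m. if A r u \<noteq> 0 then a u else 0)"
    unfolding row_support_def by (simp add: sum.inter_filter sum.swap[of _ "{..<m}"])
  also have "\<dots> = (\<Sum>u\<in>S. real (card (nbrs_right m A u)) * a u)"
    by (intro sum.cong refl) (simp add: sum.If_cases nbrs_right_def Int_def)
  also have "\<dots> = real t * sum a S"
    using lr S by (auto simp: left_regular_def sum_distrib_left intro!: sum.cong)
  finally show ?thesis .
qed

lemma collisions_le_expander:
  assumes exp: "unique_expander m n A t \<gamma> \<mu>" and S: "S \<subseteq> {..<n}"
    and small: "real (card S) \<le> \<gamma> * real n"
  shows "defect m A (\<lambda>_. 1) S \<le> \<mu> * real t * real (card S)"
proof -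
  let ?T = "row_support A S"
  have fin: "finite S"
    using S finite_subset by blast
  have "defect m A (\<lambda>_. 1) S \<le> (\<Sum>r<m. real (card (?T r)) - (if card (?T r) = 1 then 1 else 0))"
    unfolding defect_def using fin by (intro sum_mono) (auto simp: excess_def)
  also have "\<dots> = real t * real (card S) - real (card (unique_neighbors m A S))"
  proof -
    have "unique_neighbors m A S = {r \<in> {..<m}. card (?T r) = 1}"
      by (auto simp: unique_neighbors_def row_support_def)
    then have "real (card (unique_neighbors m A S)) = (\<Sum>r<m. if card (?T r) = 1 then 1 else 0)"
      by (simp add: sum.If_cases Int_def conj_commute)
    moreover have "(\<Sum>r<m. real (card (?T r))) = real t * real (card S)"
      using sum_row_support[OF S, of m A t "\<lambda>_. 1"] exp by (simp add: unique_expander_def)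
    ultimately show ?thesis
      by (simp add: sum_subtractf)
  qed
  also have "\<dots> \<le> \<mu> * real t * real (card S)"
    using exp S small by (auto simp: unique_expander_def algebra_simps)
  finally show ?thesis .
qed

lemma defect_le_expander:
  assumes exp: "unique_expander m n A t \<gamma> \<mu>" and S: "S \<subseteq> {..<n}"
    and small: "real (card S) \<le> \<gamma> * real n" and nonneg: "\<And>u. u \<in> S \<Longrightarrow> 0 \<le> a u"
  shows "defect m A a S \<le> \<mu> * real t * sum a S"
proof (rule defect_le_of_collision_bound)
  show "finite S"
    using S finite_subset by blast
  show "defect m A (\<lambda>_. 1) S' \<le> \<mu> * real t * real (card S')" if "S' \<subseteq> S" for S'
  proof (rule collisions_le_expander[OF exp])
    show "S' \<subseteq> {..<n}"
      using that S by blast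
    have "card S' \<le> card S"
      using that \<open>finite S\<close> by (rule card_mono[rotated])
    then show "real (card S') \<le> \<gamma> * real n"
      using small by linarith
  qed
qed (rule nonneg)

lemma mat_vec_eq_sum_row_support:
  assumes "S \<subseteq> {..<n}" "\<And>u. u < n \<Longrightarrow> u \<notin> S \<Longrightarrow> x u = 0"
  shows "mat_vec n A x r = (\<Sum>u\<in>row_support A S r. A r u * x u)"
  unfolding mat_vec_def
  by (rule sum.mono_neutral_right) (use assms in \<open>auto simp: row_support_def\<close>)

lemma pnorm_pow_eq_sum:
  assumes "S \<subseteq> {..<n}" "\<And>u. u < n \<Longrightarrow> u \<notin> S \<Longrightarrow> x u = 0"
  shows "pnorm_pow n p x = (\<Sum>u\<in>S. \<bar>x u\<bar> powr p)"
  unfolding pnorm_pow_def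
  by (rule sum.mono_neutral_right) (use assms in auto)

lemma card_row_support_le_s_max:
  assumes "S \<subseteq> {..<n}" "r < m"
  shows "card (row_support A S r) \<le> s_max m n A"
proof -
  have "card (row_support A S r) \<le> card {u. u < n \<and> A r u \<noteq> 0}"
    using assms(1) by (intro card_mono) (auto simp: row_support_def)
  also have "\<dots> \<le> s_max m n A"
    unfolding s_max_def using assms(2) by (intro Max_ge) auto
  finally show ?thesis .
qed

lemma abs_entry_row_support:
  assumes "\<forall>r<m. \<forall>u<n. A r u \<in> {0, 1, -1}" "S \<subseteq> {..<n}" "r < m" "u \<in> row_support A S r"
  shows "\<bar>A r u\<bar> = 1"
proof -
  have "u < n" "A r u \<noteq> 0"
    using assms(2,4) by (auto simp: row_support_def)
  then show ?thesis
    using assms(1,3) by fastforce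
qed

lemma pnorm_pow_mat_vec_le:
  assumes entries: "\<forall>r<m. \<forall>u<n. A r u \<in> {0, 1, -1}" and exp: "unique_expander m n A t \<gamma> \<mu>"
    and S: "S \<subseteq> {..<n}" "\<And>u. u < n \<Longrightarrow> u \<notin> S \<Longrightarrow> x u = 0"
    and small: "real (card S) \<le> \<gamma> * real n" and p: "p \<ge> 1" and \<delta>: "0 < \<delta>" "\<delta> < 1"
  defines "R \<equiv> rpow (real (s_max m n A) - 1) (p - 1)"
  shows "pnorm_pow m p (mat_vec n A x)
           \<le> (real t / (1 - \<delta>) powr (p - 1) + \<mu> * real t / \<delta> powr (p - 1) * R) * pnorm_pow n p x"
proof -
  define a where "a = (\<lambda>u. \<bar>x u\<bar> powr p)"
  define D where "D = defect m A a S"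
  let ?T = "row_support A S"
  have fin: "finite S"
    using S(1) finite_subset by blast
  have N: "pnorm_pow n p x = sum a S"
    unfolding a_def by (rule pnorm_pow_eq_sum[OF S])
  have "pnorm_pow m p (mat_vec n A x) = (\<Sum>r<m. \<bar>\<Sum>u\<in>?T r. A r u * x u\<bar> powr p)"
    unfolding pnorm_pow_def using mat_vec_eq_sum_row_support[OF S] by simp
  also have "\<dots> \<le> (\<Sum>r<m. (sum a (?T r) - excess a (?T r)) / (1 - \<delta>) powr (p - 1)
                         + R * excess a (?T r) / \<delta> powr (p - 1))"
    unfolding a_def R_def using fin p \<delta>
    by (intro sum_mono powr_abs_sum_le_peak card_row_support_le_s_max[OF S(1)]
        abs_entry_row_support[OF entries S(1)]) auto
  also have "\<dots> = (real t * sum a S - D) / (1 - \<delta>) powr (p - 1) + R * D / \<delta> powr (p - 1)"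
    using sum_row_support[OF S(1), of m A t a] exp
    by (simp add: D_def defect_def unique_expander_def sum.distrib sum_subtractf sum_distrib_left
        flip: sum_divide_distrib)
  also have "\<dots> \<le> real t * sum a S / (1 - \<delta>) powr (p - 1) + R * (\<mu> * real t * sum a S) / \<delta> powr (p - 1)"
    using defect_nonneg[OF fin] defect_le_expander[OF exp S(1) small] \<delta>
    by (intro add_mono divide_right_mono mult_left_mono) (auto simp: D_def a_def R_def rpow_def)
  finally show ?thesis
    unfolding N by (simp add: algebra_simps)
qed

lemma pnorm_pow_mat_vec_ge:
  assumes entries: "\<forall>r<m. \<forall>u<n. A r u \<in> {0, 1, -1}" and exp: "unique_expander m n A t \<gamma> \<mu>"
    and S: "S \<subseteq> {..<n}" "\<And>u. u < n \<Longrightarrow> u \<notin> S \<Longrightarrow> x u = 0"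
    and small: "real (card S) \<le> \<gamma> * real n" and p: "p \<ge> 1" and \<delta>: "0 < \<delta>"
  defines "R \<equiv> rpow (real (s_max m n A) - 1) (p - 1)"
  shows "pnorm_pow m p (mat_vec n A x)
           \<ge> (real t * (1 - \<mu>) / (1 + \<delta>) powr (p - 1) - \<mu> * real t / \<delta> powr (p - 1) * R)
             * pnorm_pow n p x"
proof -
  define a where "a = (\<lambda>u. \<bar>x u\<bar> powr p)"
  define D where "D = defect m A a S"
  let ?T = "row_support A S"
  have fin: "finite S"
    using S(1) finite_subset by blast
  have N: "pnorm_pow n p x = sum a S"
    unfolding a_def by (rule pnorm_pow_eq_sum[OF S])
  have "(real t * (1 - \<mu>) / (1 + \<delta>) powr (p - 1) - \<mu> * real t / \<delta> powr (p - 1) * R) * sum a S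
      = (real t * sum a S - \<mu> * real t * sum a S) / (1 + \<delta>) powr (p - 1)
        - R * (\<mu> * real t * sum a S) / \<delta> powr (p - 1)"
    by (simp add: algebra_simps)
  also have "\<dots> \<le> (real t * sum a S - D) / (1 + \<delta>) powr (p - 1) - R * D / \<delta> powr (p - 1)"
    using defect_le_expander[OF exp S(1) small] \<delta>
    by (intro diff_mono divide_right_mono mult_left_mono) (auto simp: D_def a_def R_def rpow_def)
  also have "\<dots> = (\<Sum>r<m. (sum a (?T r) - excess a (?T r)) / (1 + \<delta>) powr (p - 1)
                         - R * excess a (?T r) / \<delta> powr (p - 1))"
    using sum_row_support[OF S(1), of m A t a] exp
    by (simp add: D_def defect_def unique_expander_def sum_subtractf sum_distrib_left
        flip: sum_divide_distrib)
  also have "\<dots> \<le> (\<Sum>r<m. \<bar>\<Sum>u\<in>?T r. A r u * x u\<bar> powr p)"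
    unfolding a_def R_def using fin p \<delta>
    by (intro sum_mono powr_abs_sum_ge_peak card_row_support_le_s_max[OF S(1)]
        abs_entry_row_support[OF entries S(1)]) auto
  also have "\<dots> = pnorm_pow m p (mat_vec n A x)"
    unfolding pnorm_pow_def using mat_vec_eq_sum_row_support[OF S] by simp
  finally show ?thesis
    unfolding N .
qed

theorem lemma6p1:
  fixes m n t :: nat and A :: "nat \<Rightarrow> nat \<Rightarrow> real" and \<gamma> \<mu> p \<delta>\<^sub>1 \<delta>\<^sub>2 :: real
    and x :: "nat \<Rightarrow> real"
  assumes entries: "\<forall>r<m. \<forall>u<n. A r u \<in> {0, 1, -1}"
    and exp: "unique_expander m n A t \<gamma> \<mu>"
    and p: "p \<ge> 1" and d1: "\<delta>\<^sub>1 > 0" and d2: "0 < \<delta>\<^sub>2" "\<delta>\<^sub>2 < 1"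
    and xs: "sparse n x (\<gamma> * real n)"
  shows "pnorm_pow m p (mat_vec n A x) \<ge>
           (real t * (1 - \<mu>) / (1 + \<delta>\<^sub>1) powr (p - 1)
            - \<mu> * real t / \<delta>\<^sub>1 powr (p - 1) * rpow (real (s_max m n A) - 1) (p - 1))
           * pnorm_pow n p x
     \<and> pnorm_pow m p (mat_vec n A x) \<le>
           (real t / (1 - \<delta>\<^sub>2) powr (p - 1)
            + \<mu> * real t / \<delta>\<^sub>2 powr (p - 1) * rpow (real (s_max m n A) - 1) (p - 1))
           * pnorm_pow n p x"
proof -
  define S where "S = {u. u < n \<and> x u \<noteq> 0}"
  have S: "S \<subseteq> {..<n}" "\<And>u. u < n \<Longrightarrow> u \<notin> S \<Longrightarrow> x u = 0"
    by (auto simp: S_def)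
  have small: "real (card S) \<le> \<gamma> * real n"
    using xs by (simp add: S_def sparse_def)
  show ?thesis
    using pnorm_pow_mat_vec_ge[where x = x, OF entries exp S small p d1]
      pnorm_pow_mat_vec_le[where x = x, OF entries exp S small p d2] by blast
qed

end
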